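(* Let $k\ge 6$ be an integer, and let $(a_n)$ be a sequence satisfying $a_n=a_{n-1}+a_{n-k}$ for all sufficiently large $n$. Let $r_1,\ldots,r_k$ be the complex roots of the characteristic polynomial $x^k-x^{k-1}-1$, ordered so that $|r_1|\ge|r_2|\ge\cdots\ge|r_k|$. Then $|r_2|>1$ and $r_2$ is not real. *)

theory Defs
  imports "HOL-Analysis.Analysis" "HOL-Computational_Algebra.Computational_Algebra"
begin

definition char_poly :: "nat \<Rightarrow> complex poly" where
  "char_poly k = monom 1 k - monom 1 (k - 1) - 1"

end

theory Submission
  imports Defs
begin

(* With n = k - 1 the roots of the characteristic polynomial are the solutions of
   z^n (z - 1) = 1. There is exactly one real solution rho > 1, and comparing
   |z|^n |z - 1| with rho^n (rho - 1) shows that every other root has modulus < rho,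
   so r 1 = rho. To find a non-real root of modulus > 1, take for 1 <= R <= rho the
   triangle 0, 1, z with |z| = R and |z - 1| = R^-n, so that |z^n (z - 1)| = 1.
   The argument n arg z + arg (z - 1) varies continuously from n pi/3 + 2 pi/3 > 2 pi
   (equilateral triangle at R = 1; here n >= 5 is used) down to 0 (degenerate triangle
   at R = rho); where it equals 2 pi, z is a root with 1 < |z| < rho. This root and its
   conjugate give |r 2| > 1. Since all roots are simple, r 2 differs from r 1 = rho,
   the only real root of modulus > 1; hence r 2 is not real. *)

lemma poly_char_poly_Suc: "poly (char_poly (Suc n)) z = z ^ n * (z - 1) - 1"
  by (simp add: char_poly_def poly_monom algebra_simps)

lemma char_poly_Suc_root_iff: "poly (char_poly (Suc n)) z = 0 \<longleftrightarrow> z ^ n * (z - 1) = 1"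
  by (simp add: poly_char_poly_Suc)

lemma rsquarefree_char_poly_Suc: "rsquarefree (char_poly (Suc n))"
  unfolding rsquarefree_roots
proof (intro allI notI, elim conjE)
  fix z :: complex
  assume root: "poly (char_poly (Suc n)) z = 0"
    and critical: "poly (pderiv (char_poly (Suc n))) z = 0"
  have "z * poly (pderiv (char_poly (Suc n))) z = z ^ n * (of_nat (Suc n) * z - of_nat n)"
    by (cases n)
      (simp_all add: char_poly_def pderiv_add pderiv_diff pderiv_monom poly_monom algebra_simps)
  then have "z = 0 \<or> of_nat (Suc n) * z = of_nat n"
    using critical by auto
  then obtain s :: real where z: "z = of_real s" and "0 \<le> s" "s < 1"
  proof (elim disjE)
    assume "z = 0"
    then show ?thesis using that[of 0] by simp
  next
    assume "of_nat (Suc n) * z = of_nat n"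
    then have "z = of_real (n / Suc n)"
      by (simp add: field_simps del: of_nat_Suc)
    moreover have "0 \<le> real n / Suc n" "real n / Suc n < 1" by simp_all
    ultimately show ?thesis using that by blast
  qed
  then have "s ^ n * (s - 1) \<le> 0"
    by (simp add: mult_nonneg_nonpos)
  moreover have "of_real (s ^ n * (s - 1)) = (1 :: complex)"
    using root z by (simp add: char_poly_Suc_root_iff)
  ultimately show False
    by (metis of_real_eq_1_iff zero_less_one not_le)
qed

lemma image_enumeration_proots:
  assumes "mset (map r [1..<k+1]) = proots p" "p \<noteq> 0"
  shows "r ` {1..k} = {z. poly p z = 0}"
proof -
  have "r ` {1..k} = set (map r [1..<k+1])" by auto
  also have "\<dots> = set_mset (proots p)" by (metis assms(1) set_mset_mset)
  finally show ?thesis using assms(2) by simp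
qed

lemma inj_on_enumeration_proots:
  assumes "mset (map r [1..<k+1]) = proots p" "rsquarefree p"
  shows "inj_on r {1..k}"
proof -
  have "p \<noteq> 0" using assms(2) by (simp add: rsquarefree_def)
  then have "count (proots p) a = (if a \<in># proots p then 1 else 0)" for a
    using rsquarefree_root_order[OF assms(2) _ \<open>p \<noteq> 0\<close>, of a] by (simp add: order_root)
  then have "distinct (map r [1..<k+1])"
    unfolding distinct_count_atmost_1 assms(1) by (metis assms(1) set_mset_mset)
  moreover have "set [1..<k+1] = {1..k}" by auto
  ultimately show ?thesis
    by (metis distinct_map)
qed

lemma second_largest_norm_gt:
  fixes r :: "nat \<Rightarrow> 'a::real_normed_vector"
  assumes antimono: "\<And>i j. 1 \<le> i \<Longrightarrow> i \<le> j \<Longrightarrow> j \<le> k \<Longrightarrow> norm (r j) \<le> norm (r i)"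
    and "v \<in> r ` {1..k}" "w \<in> r ` {1..k}" "v \<noteq> w" "c < norm v" "c < norm w"
  shows "c < norm (r 2)"
proof -
  obtain i j where ij: "v = r i" "w = r j" "i \<in> {1..k}" "j \<in> {1..k}"
    using assms(2,3) by blast
  then have "i \<noteq> j" using \<open>v \<noteq> w\<close> by auto
  then have "2 \<le> i \<or> 2 \<le> j" using ij(3,4) by auto
  then show ?thesis
    using antimono[of 2 i] antimono[of 2 j] ij assms(5,6) by auto
qed

lemma power_mult_minus_one_strict_mono:
  fixes a b :: real
  assumes "1 \<le> a" "a < b"
  shows "a ^ n * (a - 1) < b ^ n * (b - 1)"
  using assms by (intro mult_le_less_imp_less power_mono) auto

lemma real_root_gt_1_exists: "\<exists>\<rho>::real. 1 < \<rho> \<and> \<rho> ^ n * (\<rho> - 1) = 1"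
proof -
  have "\<exists>x. 1 \<le> x \<and> x \<le> 2 \<and> x ^ n * (x - 1) = (1::real)"
    by (rule IVT') (auto intro!: continuous_intros simp: one_le_power)
  then obtain x :: real where "1 \<le> x" "x ^ n * (x - 1) = 1" by blast
  moreover have "x \<noteq> 1" using \<open>x ^ n * (x - 1) = 1\<close> by auto
  ultimately show ?thesis by (intro exI[of _ x]) auto
qed

lemma real_root_unique:
  fixes x \<rho> :: real
  assumes "1 < \<rho>" "\<rho> ^ n * (\<rho> - 1) = 1" "1 < \<bar>x\<bar>" "x ^ n * (x - 1) = 1"
  shows "x = \<rho>"
proof (cases "x < -1")
  case True
  have "1 * 2 \<le> \<bar>x\<bar> ^ n * \<bar>x - 1\<bar>"
    using True assms(3) by (intro mult_mono) (auto simp: one_le_power)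
  then have "2 \<le> \<bar>x ^ n * (x - 1)\<bar>" by (simp add: abs_mult power_abs)
  then show ?thesis using assms(4) by simp
next
  case False
  then have "1 < x" using assms(3) by auto
  then show ?thesis
    using power_mult_minus_one_strict_mono[of x \<rho> n] power_mult_minus_one_strict_mono[of \<rho> x n]
      assms by (cases x \<rho> rule: linorder_cases) auto
qed

lemma real_root_unique_complex:
  fixes z :: complex and \<rho> :: real
  assumes "1 < \<rho>" "\<rho> ^ n * (\<rho> - 1) = 1" "z \<in> \<real>" "1 < cmod z" "z ^ n * (z - 1) = 1"
  shows "z = of_real \<rho>"
proof -
  obtain t where t: "z = of_real t" using assms(3) by (auto elim: Reals_cases)
  have "of_real (t ^ n * (t - 1)) = (1 :: complex)"
    using assms(5) by (simp add: t)
  then have "t ^ n * (t - 1) = 1"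
    using of_real_eq_1_iff by blast
  then show ?thesis
    using real_root_unique[OF assms(1,2)] assms(4) by (simp add: t)
qed

lemma cmod_diff_one_eq_imp_of_real:
  assumes "cmod (z - 1) = cmod z - 1"
  shows "z = of_real (cmod z)"
proof -
  have "(Re z - 1)^2 + (Im z)^2 = (cmod z - 1)^2"
    using cmod_power2[of "z - 1"] assms by simp
  moreover have "(Re z)^2 + (Im z)^2 = (cmod z)^2"
    by (simp add: cmod_power2)
  ultimately have "Re z = cmod z"
    by (simp add: power2_eq_square algebra_simps)
  then have "Im z = 0"
    using \<open>(Re z)^2 + (Im z)^2 = (cmod z)^2\<close> by simp
  then show ?thesis using \<open>Re z = cmod z\<close> by (simp add: complex_eq_iff)
qed

lemma real_root_strictly_dominant:
  fixes z :: complex and \<rho> :: real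
  assumes "1 < \<rho>" "\<rho> ^ n * (\<rho> - 1) = 1" "z ^ n * (z - 1) = 1" "\<rho> \<le> cmod z"
  shows "z = of_real \<rho>"
proof -
  have product: "cmod z ^ n * cmod (z - 1) = \<rho> ^ n * (\<rho> - 1)"
    using arg_cong[OF assms(3), of cmod] assms(2) by (simp add: norm_mult norm_power)
  have triangle: "cmod z - 1 \<le> cmod (z - 1)"
    using norm_triangle_ineq2[of z 1] by simp
  have "cmod z = \<rho>"
  proof (rule ccontr)
    assume "cmod z \<noteq> \<rho>"
    then have "\<rho> ^ n * (\<rho> - 1) < cmod z ^ n * cmod (z - 1)"
      using assms(1,4) triangle by (intro mult_le_less_imp_less power_mono) auto
    then show False using product by simp
  qed
  then have "cmod (z - 1) = cmod z - 1"
    using product assms(1) by simp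
  then show ?thesis
    using cmod_diff_one_eq_imp_of_real \<open>cmod z = \<rho>\<close> by metis
qed

lemma rcis_arccos:
  assumes "0 < R" "\<bar>x\<bar> \<le> R"
  shows "rcis R (arccos (x / R)) = Complex x (sqrt (R^2 - x^2))"
proof -
  have bounds: "\<bar>x / R\<bar> \<le> 1" using assms by (simp add: divide_le_eq_1)
  have "1 - (x / R)^2 = (R^2 - x^2) / R^2"
    using assms(1) by (simp add: field_simps)
  then have "R * sin (arccos (x / R)) = sqrt (R^2 - x^2)"
    using bounds assms(1) by (simp add: sin_arccos_abs real_sqrt_divide)
  then show ?thesis
    using bounds assms(1) by (simp add: rcis_def cis.ctr complex_eq_iff cos_arccos_abs)
qed

lemma triangle_apex_bounds:
  fixes R S :: real
  assumes "\<bar>R - S\<bar> \<le> 1" "1 \<le> R + S"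
  defines "X \<equiv> (R^2 + 1 - S^2) / 2"
  shows "\<bar>X\<bar> \<le> R" "\<bar>X - 1\<bar> \<le> S" "S^2 - (X - 1)^2 = R^2 - X^2"
proof -
  have "(R - 1)^2 \<le> S^2" "S^2 \<le> (R + 1)^2" "R^2 \<le> (S + 1)^2" "(S - 1)^2 \<le> R^2"
    using assms(1,2) by (auto simp: abs_le_square_iff[symmetric] abs_le_iff)
  then have "R^2 - 2*R + 1 \<le> S^2" "S^2 \<le> R^2 + 2*R + 1"
      "R^2 \<le> S^2 + 2*S + 1" "S^2 - 2*S + 1 \<le> R^2"
    by (simp_all add: power2_diff power2_sum)
  moreover have "2 * X = R^2 + 1 - S^2" "(X - 1)^2 = X^2 - 2*X + 1"
    by (simp_all add: X_def power2_diff)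
  ultimately show "\<bar>X\<bar> \<le> R" "\<bar>X - 1\<bar> \<le> S" "S^2 - (X - 1)^2 = R^2 - X^2"
    by (simp_all add: abs_le_iff)
qed

(* For the triangle 0, 1, z with |z| = R and |z - 1| = S, x is Re z and the two arccos
   terms are arg z and arg (z - 1) (law of cosines), so this is arg (z^n (z - 1)). *)
definition apex_angle :: "nat \<Rightarrow> real \<Rightarrow> real \<Rightarrow> real" where
  "apex_angle n R S = (let x = (R^2 + 1 - S^2) / 2 in real n * arccos (x / R) + arccos ((x - 1) / S))"

lemma triangle_apex_root:
  fixes R S :: real
  assumes "0 < R" "0 < S" "\<bar>R - S\<bar> \<le> 1" "1 \<le> R + S" "R ^ n * S = 1"
    and "apex_angle n R S = 2 * pi"
  shows "\<exists>z::complex. z ^ n * (z - 1) = 1 \<and> cmod z = R"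
proof -
  define X where "X = (R^2 + 1 - S^2) / 2"
  define z where "z = rcis R (arccos (X / R))"
  note apex = triangle_apex_bounds[OF assms(3,4), folded X_def]
  have "z = Complex X (sqrt (R^2 - X^2))"
    unfolding z_def using assms(1) apex(1) by (rule rcis_arccos)
  also have "\<dots> = rcis S (arccos ((X - 1) / S)) + 1"
    using rcis_arccos[OF assms(2) apex(2)] apex(3) by (simp add: complex_eq_iff)
  finally have "z - 1 = rcis S (arccos ((X - 1) / S))" by simp
  then have "z ^ n * (z - 1) = rcis (R ^ n * S) (apex_angle n R S)"
    by (simp add: z_def DeMoivre2 rcis_mult apex_angle_def X_def Let_def)
  also have "\<dots> = 1"
    using assms(5,6) by (simp add: rcis_def)
  finally show ?thesis
    using assms(1) by (intro exI[of _ z]) (simp add: z_def)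
qed

lemma triangle_sides_below_real_root:
  fixes R \<rho> :: real
  assumes "1 < \<rho>" "\<rho> ^ n * (\<rho> - 1) = 1" "1 \<le> R" "R \<le> \<rho>"
  shows "0 < 1 / R ^ n" "\<bar>R - 1 / R ^ n\<bar> \<le> 1" "1 \<le> R + 1 / R ^ n"
proof -
  have "R ^ n * (R - 1) \<le> 1"
    using power_mult_minus_one_strict_mono[of R \<rho> n] assms by (cases "R = \<rho>") auto
  then have "R - 1 \<le> 1 / R ^ n"
    using assms(3) by (simp add: field_simps)
  moreover have "0 < 1 / R ^ n" "1 / R ^ n \<le> 1"
    using assms(3) by (simp_all add: one_le_power)
  ultimately show "0 < 1 / R ^ n" "\<bar>R - 1 / R ^ n\<bar> \<le> 1" "1 \<le> R + 1 / R ^ n"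
    using assms(3) by arith+
qed

lemma continuous_on_apex_angle:
  fixes \<rho> :: real
  assumes "1 < \<rho>" "\<rho> ^ n * (\<rho> - 1) = 1"
  shows "continuous_on {1..\<rho>} (\<lambda>R. apex_angle n R (1 / R ^ n))"
proof -
  define S where "S R = 1 / R ^ n" for R :: real
  define X where "X R = (R^2 + 1 - (S R)^2) / 2" for R
  note triangle = triangle_sides_below_real_root[OF assms, folded S_def]
  have arccos_domain: "-1 \<le> X R / R \<and> X R / R \<le> 1"
      "-1 \<le> (X R - 1) / S R \<and> (X R - 1) / S R \<le> 1" if "R \<in> {1..\<rho>}" for R
  proof -
    have R: "1 \<le> R" "R \<le> \<rho>" using that by simp_all
    then have "\<bar>X R / R\<bar> \<le> 1" "\<bar>(X R - 1) / S R\<bar> \<le> 1"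
      using triangle_apex_bounds[OF triangle(2,3)[OF R]] triangle(1)[OF R]
      by (simp_all add: X_def divide_le_eq_1 abs_divide)
    then show "-1 \<le> X R / R \<and> X R / R \<le> 1" "-1 \<le> (X R - 1) / S R \<and> (X R - 1) / S R \<le> 1"
      by (auto simp: abs_le_iff simp del: abs_divide)
  qed
  have nonzero: "R \<noteq> 0" "S R \<noteq> 0" if "R \<in> {1..\<rho>}" for R
    using that triangle(1)[of R] by auto
  have "continuous_on {1..\<rho>} S"
    unfolding S_def by (intro continuous_intros) auto
  moreover from this have "continuous_on {1..\<rho>} X"
    unfolding X_def by (intro continuous_intros) auto
  ultimately have "continuous_on {1..\<rho>} (\<lambda>R. real n * arccos (X R / R) + arccos ((X R - 1) / S R))"
    by (auto intro!: continuous_intros arccos_domain nonzero)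
  then show ?thesis
    by (simp add: apex_angle_def X_def S_def Let_def)
qed

lemma apex_angle_crosses_2pi:
  fixes \<rho> :: real
  assumes "5 \<le> n" "1 < \<rho>" "\<rho> ^ n * (\<rho> - 1) = 1"
  shows "\<exists>R. 1 < R \<and> R < \<rho> \<and> apex_angle n R (1 / R ^ n) = 2 * pi"
proof -
  have "1 / \<rho> ^ n = \<rho> - 1"
    using assms(2,3) by (simp add: field_simps)
  moreover have "(\<rho>^2 + 1 - (\<rho> - 1)^2) / 2 = \<rho>"
    by (simp add: power2_eq_square algebra_simps)
  ultimately have at_\<rho>: "apex_angle n \<rho> (1 / \<rho> ^ n) = 0"
    using assms(2) by (simp add: apex_angle_def)
  have "apex_angle n 1 (1 / 1 ^ n) = real n * (pi / 3) + 2 * pi / 3"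
    by (simp add: apex_angle_def arccos_minus)
  moreover have "5 * (pi / 3) \<le> real n * (pi / 3)"
    using assms(1) by (intro mult_right_mono) auto
  ultimately have at_1: "2 * pi < apex_angle n 1 (1 / 1 ^ n)"
    using pi_gt_zero by linarith
  obtain R where "1 \<le> R" "R \<le> \<rho>" "apex_angle n R (1 / R ^ n) = 2 * pi"
    using IVT2'[of "\<lambda>R. apex_angle n R (1 / R ^ n)" \<rho> "2 * pi" 1] at_\<rho> at_1
      continuous_on_apex_angle[OF assms(2,3)] assms(2) by auto
  moreover have "R \<noteq> 1" "R \<noteq> \<rho>"
    using calculation at_1 at_\<rho> by auto
  ultimately show ?thesis
    by (intro exI[of _ R]) auto
qed

lemma nonreal_root_norm_gt_1_exists:
  assumes "5 \<le> n"
  shows "\<exists>z::complex. z ^ n * (z - 1) = 1 \<and> 1 < cmod z \<and> Im z \<noteq> 0"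
proof -
  obtain \<rho> :: real where \<rho>: "1 < \<rho>" "\<rho> ^ n * (\<rho> - 1) = 1"
    using real_root_gt_1_exists by blast
  obtain R where R: "1 < R" "R < \<rho>" "apex_angle n R (1 / R ^ n) = 2 * pi"
    using apex_angle_crosses_2pi[OF assms \<rho>] by blast
  have "R ^ n * (1 / R ^ n) = 1"
    using R(1) by simp
  then obtain z where z: "z ^ n * (z - 1) = 1" "cmod z = R"
    using triangle_apex_root[of R "1 / R ^ n"] triangle_sides_below_real_root[OF \<rho>, of R] R
    by auto
  have "z \<notin> \<real>"
    using real_root_unique_complex[OF \<rho> _ _ z(1)] z(2) R by auto
  then show ?thesis
    using z R(1) by (auto simp: complex_is_Real_iff)
qed

theorem mainTheorem6:
  fixes k :: nat and a :: "nat \<Rightarrow> complex" and r :: "nat \<Rightarrow> complex"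
  assumes "k \<ge> 6"
    and "\<exists>N. \<forall>n\<ge>N. a n = a (n - 1) + a (n - k)"
    and "mset (map r [1..<k+1]) = proots (char_poly k)"
    and "\<forall>i j. 1 \<le> i \<longrightarrow> i \<le> j \<longrightarrow> j \<le> k \<longrightarrow> cmod (r j) \<le> cmod (r i)"
  shows "cmod (r 2) > 1 \<and> r 2 \<notin> \<real>"
proof -
  define n where "n = k - 1"
  have k: "k = Suc n" and "5 \<le> n"
    using assms(1) by (simp_all add: n_def)
  have antimono: "\<And>i j. 1 \<le> i \<Longrightarrow> i \<le> j \<Longrightarrow> j \<le> k \<Longrightarrow> cmod (r j) \<le> cmod (r i)"
    using assms(4) by blast
  have roots: "r ` {1..k} = {z. z ^ n * (z - 1) = 1}"
    using image_enumeration_proots[OF assms(3)] rsquarefree_char_poly_Suc[of n]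
    by (simp add: k rsquarefree_def char_poly_Suc_root_iff)
  have inj: "inj_on r {1..k}"
    using inj_on_enumeration_proots[OF assms(3)] rsquarefree_char_poly_Suc by (simp add: k)
  obtain w where w: "w ^ n * (w - 1) = 1" "1 < cmod w" "Im w \<noteq> 0"
    using nonreal_root_norm_gt_1_exists[OF \<open>5 \<le> n\<close>] by blast
  have "cnj w ^ n * (cnj w - 1) = 1"
    using arg_cong[OF w(1), of cnj] by simp
  then have "1 < cmod (r 2)"
    using w roots
    by (intro second_largest_norm_gt[OF antimono, where v = w and w = "cnj w"])
      (auto simp: complex_eq_iff)
  moreover have "r 2 \<notin> \<real>"
  proof
    assume "r 2 \<in> \<real>"
    obtain \<rho> :: real where \<rho>: "1 < \<rho>" "\<rho> ^ n * (\<rho> - 1) = 1"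
      using real_root_gt_1_exists by blast
    have root: "r i ^ n * (r i - 1) = 1" if "i \<in> {1..k}" for i
      using roots that by blast
    have "r 2 = of_real \<rho>"
      using real_root_unique_complex[OF \<rho> \<open>r 2 \<in> \<real>\<close> \<open>1 < cmod (r 2)\<close>] root assms(1) by simp
    moreover have "r 1 = of_real \<rho>"
      using real_root_strictly_dominant[OF \<rho> root] antimono[of 1 2] \<open>r 2 = of_real \<rho>\<close> \<rho>(1) assms(1)
      by simp
    ultimately show False
      using inj_onD[OF inj, of 1 2] assms(1) by simp
  qed
  ultimately show ?thesis ..
qed

end
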